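(* Let $G$ be a graph with at least one edge and let $x$ be a non-isolated vertex of $G$. Then there exists a Grundy total dominating sequence of $G$ that contains $x$.
   Context: For a graph $G$, $N(v)$ denotes the open neighborhood of $v$. A sequence $(v_1,\ldots,v_k)$ of distinct vertices is an open neighborhood sequence if $N(v_i)\setminus\bigcup_{j=1}^{i-1}N(v_j)\neq\emptyset$ for each $i\in[k]$. A Grundy total dominating sequence is an open neighborhood sequence of maximum possible length in $G$. *)

theory Defs
  imports Main
begin

definition graph :: "'a set \<Rightarrow> ('a \<Rightarrow> 'a \<Rightarrow> bool) \<Rightarrow> bool" where
  "graph V E \<longleftrightarrow> finite V \<and> (\<forall>u v. E u v \<longrightarrow> u \<in> V \<and> v \<in> V)
      \<and> (\<forall>u v. E u v \<longrightarrow> E v u) \<and> (\<forall>v. \<not> E v v)"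

definition nbhd :: "('a \<Rightarrow> 'a \<Rightarrow> bool) \<Rightarrow> 'a \<Rightarrow> 'a set" where
  "nbhd E v = {u. E v u}"

definition open_nbhd_seq :: "'a set \<Rightarrow> ('a \<Rightarrow> 'a \<Rightarrow> bool) \<Rightarrow> 'a list \<Rightarrow> bool" where
  "open_nbhd_seq V E s \<longleftrightarrow> distinct s \<and> set s \<subseteq> V \<and>
     (\<forall>i < length s. nbhd E (s ! i) - (\<Union>j<i. nbhd E (s ! j)) \<noteq> {})"

definition grundy_total_dom_seq :: "'a set \<Rightarrow> ('a \<Rightarrow> 'a \<Rightarrow> bool) \<Rightarrow> 'a list \<Rightarrow> bool" where
  "grundy_total_dom_seq V E s \<longleftrightarrow> open_nbhd_seq V E s \<and>
     (\<forall>t. open_nbhd_seq V E t \<longrightarrow> length t \<le> length s)"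

end

theory Submission
  imports Defs
begin

(* Take any Grundy total dominating sequence s not containing x. By maximality s cannot be
   extended by x, so N(x) is covered by the neighbourhoods of s. Let s_i be the first entry
   whose neighbourhood completes this cover. Replacing s_i by x keeps an open neighbourhood
   sequence: x still footprints a vertex of N(x) not yet covered, and every later s_l keeps its
   footprint because N(x) lies inside the neighbourhoods already preceding it. *)

lemma open_nbhd_seq_length_le_card:
  assumes "finite V" "open_nbhd_seq V E t"
  shows "length t \<le> card V"
proof -
  have "distinct t" "set t \<subseteq> V" using assms(2) unfolding open_nbhd_seq_def by auto
  then show ?thesis using assms(1) by (metis card_mono distinct_card)
qed

lemma grundy_total_dom_seq_exists:
  assumes "finite V"
  shows "\<exists>s. grundy_total_dom_seq V E s"
proof -
  let ?L = "length ` {t. open_nbhd_seq V E t}"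
  have "finite ?L"
    by (rule finite_subset[of _ "{..card V}"]) (auto dest: open_nbhd_seq_length_le_card[OF assms])
  moreover have "[] \<in> {t. open_nbhd_seq V E t}" by (simp add: open_nbhd_seq_def)
  ultimately have "Max ?L \<in> ?L" by (intro Max_in) auto
  then obtain s where "open_nbhd_seq V E s" "length s = Max ?L" by auto
  with \<open>finite ?L\<close> show ?thesis unfolding grundy_total_dom_seq_def by auto
qed

lemma open_nbhd_seq_snoc_iff:
  "open_nbhd_seq V E (s @ [x]) \<longleftrightarrow>
     open_nbhd_seq V E s \<and> x \<in> V \<and> x \<notin> set s \<and>
     \<not> nbhd E x \<subseteq> (\<Union>j<length s. nbhd E (s ! j))"
proof -
  have prefix: "(\<Union>j<i. nbhd E ((s @ [x]) ! j)) = (\<Union>j<i. nbhd E (s ! j))"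
    if "i \<le> length s" for i
    using that by (auto simp: nth_append)
  have "(\<forall>i < length (s @ [x]). nbhd E ((s @ [x]) ! i) - (\<Union>j<i. nbhd E ((s @ [x]) ! j)) \<noteq> {})
    \<longleftrightarrow> (\<forall>i < length s. nbhd E (s ! i) - (\<Union>j<i. nbhd E (s ! j)) \<noteq> {})
        \<and> nbhd E x - (\<Union>j<length s. nbhd E (s ! j)) \<noteq> {}"
    by (auto simp: prefix less_Suc_eq nth_append)
  then show ?thesis unfolding open_nbhd_seq_def by auto
qed

lemma nbhd_subset_Union_if_grundy_total_dom_seq:
  assumes "grundy_total_dom_seq V E s" "x \<in> V" "x \<notin> set s"
  shows "nbhd E x \<subseteq> (\<Union>j<length s. nbhd E (s ! j))"
proof (rule ccontr)
  assume "\<not> ?thesis"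
  with assms have "open_nbhd_seq V E (s @ [x])"
    by (simp add: open_nbhd_seq_snoc_iff grundy_total_dom_seq_def)
  with assms(1) show False unfolding grundy_total_dom_seq_def by fastforce
qed

lemma discrete_ivt_Suc:
  assumes "\<not> P 0" "P n"
  shows "\<exists>i<n. \<not> P i \<and> P (Suc i)"
  using assms by (induction n) (auto intro: less_SucI)

lemma open_nbhd_seq_list_update:
  assumes s: "open_nbhd_seq V E s" and "x \<in> V" "x \<notin> set s" "i < length s"
    and fresh: "\<not> nbhd E x \<subseteq> (\<Union>j<i. nbhd E (s ! j))"
    and covered: "nbhd E x \<subseteq> (\<Union>j<Suc i. nbhd E (s ! j))"
  shows "open_nbhd_seq V E (s[i := x])"
proof -
  let ?t = "s[i := x]"
  have t_nth: "?t ! j = (if j = i then x else s ! j)" if "j < length s" for j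
    using that \<open>i < length s\<close> by simp
  have prefix_eq: "(\<Union>j<l. nbhd E (?t ! j)) = (\<Union>j<l. nbhd E (s ! j))" if "l \<le> i" for l
    using that \<open>i < length s\<close> by (auto simp: t_nth)
  have prefix_le: "(\<Union>j<l. nbhd E (?t ! j)) \<subseteq> (\<Union>j<l. nbhd E (s ! j))"
    if "i < l" "l < length s" for l
  proof
    fix w assume "w \<in> (\<Union>j<l. nbhd E (?t ! j))"
    then obtain j where j: "j < l" "w \<in> nbhd E (?t ! j)" by blast
    show "w \<in> (\<Union>j<l. nbhd E (s ! j))"
    proof (cases "j = i")
      case True
      with j \<open>i < length s\<close> have "w \<in> nbhd E x" by simp
      with covered obtain k where "k < Suc i" "w \<in> nbhd E (s ! k)" by blast
      with \<open>i < l\<close> show ?thesis by auto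
    next
      case False
      with j that show ?thesis by (auto simp: t_nth)
    qed
  qed
  have "nbhd E (?t ! l) - (\<Union>j<l. nbhd E (?t ! j)) \<noteq> {}" if "l < length s" for l
  proof (cases "l = i")
    case True
    then show ?thesis using fresh prefix_eq[of i] t_nth[OF that] by auto
  next
    case False
    have "nbhd E (s ! l) - (\<Union>j<l. nbhd E (s ! j)) \<noteq> {}"
      using s that unfolding open_nbhd_seq_def by auto
    moreover have "(\<Union>j<l. nbhd E (?t ! j)) \<subseteq> (\<Union>j<l. nbhd E (s ! j))"
    proof (cases "l < i")
      case True
      then show ?thesis using prefix_eq[of l] by simp
    next
      case False
      then show ?thesis using prefix_le[of l] \<open>l \<noteq> i\<close> that by simp
    qed
    ultimately show ?thesis using False t_nth[OF that] by auto
  qed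
  moreover have "distinct ?t" "set ?t \<subseteq> V"
    using s \<open>x \<in> V\<close> \<open>x \<notin> set s\<close> set_update_subset_insert[of s i x]
    unfolding open_nbhd_seq_def by (auto intro: distinct_list_update)
  ultimately show ?thesis unfolding open_nbhd_seq_def by simp
qed

lemma grundy_total_dom_seq_exchange:
  assumes grundy: "grundy_total_dom_seq V E s" and "x \<in> V" "x \<notin> set s" "nbhd E x \<noteq> {}"
  shows "\<exists>i<length s. grundy_total_dom_seq V E (s[i := x])"
proof -
  have "\<not> nbhd E x \<subseteq> (\<Union>j<0. nbhd E (s ! j))" using \<open>nbhd E x \<noteq> {}\<close> by simp
  moreover have "nbhd E x \<subseteq> (\<Union>j<length s. nbhd E (s ! j))"
    using nbhd_subset_Union_if_grundy_total_dom_seq[OF assms(1-3)] .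
  ultimately obtain i where "i < length s"
    and "\<not> nbhd E x \<subseteq> (\<Union>j<i. nbhd E (s ! j))" "nbhd E x \<subseteq> (\<Union>j<Suc i. nbhd E (s ! j))"
    using discrete_ivt_Suc[where P = "\<lambda>i. nbhd E x \<subseteq> (\<Union>j<i. nbhd E (s ! j))"]
    by meson
  then have "open_nbhd_seq V E (s[i := x])"
    using grundy assms(2,3)
    by (intro open_nbhd_seq_list_update) (auto simp: grundy_total_dom_seq_def)
  with grundy \<open>i < length s\<close> show ?thesis unfolding grundy_total_dom_seq_def by auto
qed

theorem proposition5p1:
  fixes V :: "'a set" and E :: "'a \<Rightarrow> 'a \<Rightarrow> bool" and x :: 'a
  assumes "graph V E"
    and "\<exists>u v. E u v"
    and "x \<in> V"
    and "\<exists>y. E x y"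
  shows "\<exists>s. grundy_total_dom_seq V E s \<and> x \<in> set s"
proof -
  have "finite V" using assms(1) unfolding graph_def by simp
  then obtain s where grundy: "grundy_total_dom_seq V E s"
    using grundy_total_dom_seq_exists by blast
  show ?thesis
  proof (cases "x \<in> set s")
    case True
    with grundy show ?thesis by blast
  next
    case False
    have "nbhd E x \<noteq> {}" using assms(4) by (auto simp: nbhd_def)
    then obtain i where "i < length s" "grundy_total_dom_seq V E (s[i := x])"
      using grundy_total_dom_seq_exchange[OF grundy assms(3) False] by blast
    moreover have "x \<in> set (s[i := x])" using \<open>i < length s\<close> by (simp add: set_update_memI)
    ultimately show ?thesis by blast
  qed
qed

end
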